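(* For every $n\ge 2$ there is a bijection between the set of connected rooted chord diagrams with $n$ chords and the set of indecomposable rooted chord diagrams with $n$ chords having exactly two connected components. Consequently, if $I_2(x)$ denotes the ordinary generating function (by number of chords) of indecomposable chord diagrams with exactly two connected components, then $I_2(x)=C(x)-x$.
   Context: A (rooted) chord diagram with $n$ chords is a perfect matching of $\{1,\dots,2n\}$; its pairs $\{a<b\}$ are the chords. Two chords $\{a<b\},\{c<d\}$ cross if $a<c<b<d$ or $c<a<d<b$. The intersection graph has the chords as vertices and edges between crossing chords; its connected components are the connected components of the diagram, and a nonempty diagram is connected if its intersection graph is connected. A chord diagram with $n$ chords is indecomposable if there is no $k$ with $0<k<n$ such that $\{1,\dots,2k\}$ is a union of chords (the empty diagram is indecomposable by convention). $C(x)=\sum_n C_n x^n$ is the ordinary generating function of connected chord diagrams ($C_n$ = number with $n$ chords; $C(x)=x+x^2+4x^3+27x^4+\cdots$). *)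

theory Defs
  imports "HOL-Computational_Algebra.Formal_Power_Series"
begin

type_synonym chord = "nat \<times> nat"

text \<open>A rooted chord diagram with n chords: a perfect matching of {1..2n},
  each chord stored as a pair (a,b) with a < b.\<close>
definition chord_diagram :: "nat \<Rightarrow> chord set \<Rightarrow> bool" where
  "chord_diagram n M \<longleftrightarrow>
     (\<forall>(a,b)\<in>M. a < b \<and> a \<in> {1..2*n} \<and> b \<in> {1..2*n}) \<and>
     (\<forall>x\<in>{1..2*n}. \<exists>!c\<in>M. x = fst c \<or> x = snd c)"

definition crosses :: "chord \<Rightarrow> chord \<Rightarrow> bool" where
  "crosses c d \<longleftrightarrow>
     (fst c < fst d \<and> fst d < snd c \<and> snd c < snd d) \<or>
     (fst d < fst c \<and> fst c < snd d \<and> snd d < snd c)"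

definition conn_rel :: "chord set \<Rightarrow> (chord \<times> chord) set" where
  "conn_rel M = (Id_on M \<union> {(c,d). c \<in> M \<and> d \<in> M \<and> crosses c d})\<^sup>*"

definition components :: "chord set \<Rightarrow> chord set set" where
  "components M = M // conn_rel M"

definition connected_diagram :: "chord set \<Rightarrow> bool" where
  "connected_diagram M \<longleftrightarrow> M \<noteq> {} \<and> (\<forall>c\<in>M. \<forall>d\<in>M. (c,d) \<in> conn_rel M)"

definition indecomposable :: "nat \<Rightarrow> chord set \<Rightarrow> bool" where
  "indecomposable n M \<longleftrightarrow>
     \<not> (\<exists>k. 0 < k \<and> k < n \<and> (\<exists>S\<subseteq>M. {1..2*k} = (\<Union>(a,b)\<in>S. {a,b})))"

definition connected_diagrams :: "nat \<Rightarrow> chord set set" where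
  "connected_diagrams n = {M. chord_diagram n M \<and> connected_diagram M}"

definition indec_two_comp_diagrams :: "nat \<Rightarrow> chord set set" where
  "indec_two_comp_diagrams n =
     {M. chord_diagram n M \<and> indecomposable n M \<and> card (components M) = 2}"

definition C_gf :: "int fps" where
  "C_gf = Abs_fps (\<lambda>n. int (card (connected_diagrams n)))"

definition I2_gf :: "int fps" where
  "I2_gf = Abs_fps (\<lambda>n. int (card (indec_two_comp_diagrams n)))"

end

theory Submission
  imports Defs
begin

text \<open>Let \<open>D\<close> be connected with root chord \<open>(1, b)\<close>. Deleting the root splits \<open>D\<close> into
  components; let \<open>K\<close> be the one containing the point 2 and \<open>u\<close> its largest point below \<open>b\<close>.
  Every other component has a chord crossing the root and, since it cannot cross \<open>K\<close>, lies entirely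
  to the right of \<open>u\<close>. Moving the point 1 to position \<open>u\<close> (and shifting \<open>2..u\<close> down by one)
  therefore turns the root into the chord \<open>(u, b)\<close>, which no longer crosses the relabelled \<open>K\<close>:
  the result has exactly the two components \<open>K\<close> and the root with everything attached to it, and it
  is indecomposable because \<open>K\<close> still reaches beyond \<open>b\<close>. Conversely, for an indecomposable
  diagram with two components, \<open>u\<close> is recovered as the first point of the component avoiding 1, and
  moving it back to the front reconnects the diagram. For \<open>n \<le> 1\<close> the only connected diagram is the
  single chord, and no diagram has two components, which accounts for the term \<open>x\<close>.\<close>

definition points :: "chord set \<Rightarrow> nat set" where
  "points M = (\<Union>c\<in>M. {fst c, snd c})"

definition matching :: "chord set \<Rightarrow> bool" where
  "matching M \<longleftrightarrow> (\<forall>c\<in>M. fst c < snd c) \<and>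
     (\<forall>c\<in>M. \<forall>d\<in>M. c \<noteq> d \<longrightarrow> {fst c, snd c} \<inter> {fst d, snd d} = {})"

definition noncrossing :: "chord set \<Rightarrow> chord set \<Rightarrow> bool" where
  "noncrossing A B \<longleftrightarrow> (\<forall>x\<in>A. \<forall>y\<in>B. \<not> crosses x y)"

definition component :: "chord set \<Rightarrow> chord \<Rightarrow> chord set" where
  "component M c = conn_rel M `` {c}"

definition chord_at :: "chord set \<Rightarrow> nat \<Rightarrow> chord" where
  "chord_at M x = (THE c. c \<in> M \<and> (x = fst c \<or> x = snd c))"

definition relabel_chord :: "(nat \<Rightarrow> nat) \<Rightarrow> chord \<Rightarrow> chord" where
  "relabel_chord f c = (min (f (fst c)) (f (snd c)), max (f (fst c)) (f (snd c)))"

definition relabel :: "(nat \<Rightarrow> nat) \<Rightarrow> chord set \<Rightarrow> chord set" where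
  "relabel f M = relabel_chord f ` M"

lemma points_Un [simp]: "points (A \<union> B) = points A \<union> points B"
  by (auto simp: points_def)

lemma points_insert [simp]: "points (insert c A) = {fst c, snd c} \<union> points A"
  by (auto simp: points_def)

lemma points_empty [simp]: "points {} = {}"
  by (auto simp: points_def)

lemma points_mono: "A \<subseteq> B \<Longrightarrow> points A \<subseteq> points B"
  by (auto simp: points_def)

lemma fst_in_points: "c \<in> A \<Longrightarrow> fst c \<in> points A"
  and snd_in_points: "c \<in> A \<Longrightarrow> snd c \<in> points A"
  by (auto simp: points_def)

lemma pointsE:
  assumes "x \<in> points A"
  obtains c where "c \<in> A" "x = fst c \<or> x = snd c"
  using assms by (auto simp: points_def)

lemma finite_points [simp]: "finite A \<Longrightarrow> finite (points A)"
  by (simp add: points_def)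

lemma matching_subset: "matching M \<Longrightarrow> A \<subseteq> M \<Longrightarrow> matching A"
  unfolding matching_def by blast

lemma matching_less: "matching M \<Longrightarrow> c \<in> M \<Longrightarrow> fst c < snd c"
  unfolding matching_def by blast

lemma matching_eqI:
  "matching M \<Longrightarrow> c \<in> M \<Longrightarrow> d \<in> M \<Longrightarrow> x \<in> {fst c, snd c} \<Longrightarrow> x \<in> {fst d, snd d} \<Longrightarrow> c = d"
  unfolding matching_def by blast

lemma matching_not_in_points:
  assumes "matching M" "c \<in> M" "A \<subseteq> M" "c \<notin> A"
  shows "fst c \<notin> points A" "snd c \<notin> points A"
proof -
  have "x \<notin> points A" if "x \<in> {fst c, snd c}" for x
    using that assms matching_eqI[OF assms(1,2)] by (blast elim: pointsE)
  then show "fst c \<notin> points A" "snd c \<notin> points A" by auto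
qed

lemma matching_points_disjoint:
  assumes "matching M" "A \<subseteq> M" "B \<subseteq> M" "A \<inter> B = {}"
  shows "points A \<inter> points B = {}"
proof (rule ccontr)
  assume "points A \<inter> points B \<noteq> {}"
  then obtain x where "x \<in> points A" "x \<in> points B" by blast
  then obtain a b where "a \<in> A" "b \<in> B" "x \<in> {fst a, snd a}" "x \<in> {fst b, snd b}"
    by (auto elim!: pointsE)
  then show False using assms matching_eqI[OF assms(1), of a b x] by blast
qed

lemma chord_at_eq:
  assumes "matching M" "c \<in> M" "x = fst c \<or> x = snd c"
  shows "chord_at M x = c"
  unfolding chord_at_def
proof (rule the_equality)
  fix d assume "d \<in> M \<and> (x = fst d \<or> x = snd d)"
  then show "d = c" using matching_eqI[OF assms(1) _ assms(2), of d x] assms(3) by auto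
qed (use assms in simp)

lemma chord_at_in:
  assumes "matching M" "x \<in> points M"
  shows "chord_at M x \<in> M" "x = fst (chord_at M x) \<or> x = snd (chord_at M x)"
proof -
  obtain c where "c \<in> M" "x = fst c \<or> x = snd c" using assms(2) by (rule pointsE)
  then show "chord_at M x \<in> M" "x = fst (chord_at M x) \<or> x = snd (chord_at M x)"
    using chord_at_eq[OF assms(1)] by auto
qed

lemma chord_diagram_iff: "chord_diagram n M \<longleftrightarrow> matching M \<and> points M = {1..2*n}"
proof
  assume cd: "chord_diagram n M"
  have range: "\<forall>c\<in>M. fst c < snd c \<and> fst c \<in> {1..2*n} \<and> snd c \<in> {1..2*n}"
    and unique: "\<forall>x\<in>{1..2*n}. \<exists>!c\<in>M. x = fst c \<or> x = snd c"
    using cd unfolding chord_diagram_def by auto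
  have "{fst c, snd c} \<inter> {fst d, snd d} = {}" if "c \<in> M" "d \<in> M" "c \<noteq> d" for c d
  proof (rule ccontr)
    assume "{fst c, snd c} \<inter> {fst d, snd d} \<noteq> {}"
    then obtain x where x: "x \<in> {fst c, snd c}" "x \<in> {fst d, snd d}" by blast
    then have "x \<in> {1..2*n}" using range that by auto
    then show False using unique x that by blast
  qed
  then have "matching M" using range unfolding matching_def by blast
  moreover have "points M = {1..2*n}"
  proof
    show "points M \<subseteq> {1..2*n}" using range by (auto simp: points_def)
    show "{1..2*n} \<subseteq> points M" using unique by (fastforce intro: fst_in_points snd_in_points)
  qed
  ultimately show "matching M \<and> points M = {1..2*n}" ..
next
  assume M: "matching M \<and> points M = {1..2*n}"
  have "\<forall>(a,b)\<in>M. a < b \<and> a \<in> {1..2*n} \<and> b \<in> {1..2*n}"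
    using M fst_in_points snd_in_points matching_less by fastforce
  moreover have "\<exists>!c\<in>M. x = fst c \<or> x = snd c" if "x \<in> {1..2*n}" for x
  proof -
    have "x \<in> points M" using that M by simp
    then obtain c where c: "c \<in> M" "x = fst c \<or> x = snd c" by (rule pointsE)
    moreover have "d = c" if "d \<in> M" "x = fst d \<or> x = snd d" for d
      using M c that matching_eqI[of M d c x] by auto
    ultimately show ?thesis by blast
  qed
  ultimately show "chord_diagram n M" unfolding chord_diagram_def by blast
qed

subsection \<open>Crossing and connectivity\<close>

lemma crosses_sym: "crosses c d = crosses d c"
  by (auto simp: crosses_def)

lemma noncrossing_sym: "noncrossing A B = noncrossing B A"
  by (auto simp: noncrossing_def crosses_sym)

lemma conn_rel_sym: "(c, d) \<in> conn_rel M \<Longrightarrow> (d, c) \<in> conn_rel M"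
proof -
  have "sym (Id_on M \<union> {(c, d). c \<in> M \<and> d \<in> M \<and> crosses c d})"
    by (auto simp: sym_def crosses_sym)
  then show "(c, d) \<in> conn_rel M \<Longrightarrow> (d, c) \<in> conn_rel M"
    unfolding conn_rel_def by (meson sym_rtrancl symD)
qed

lemma conn_rel_trans: "(c, d) \<in> conn_rel M \<Longrightarrow> (d, e) \<in> conn_rel M \<Longrightarrow> (c, e) \<in> conn_rel M"
  unfolding conn_rel_def by (rule rtrancl_trans)

lemma conn_rel_refl [simp]: "(c, c) \<in> conn_rel M"
  unfolding conn_rel_def by simp

lemma conn_rel_crosses: "c \<in> M \<Longrightarrow> d \<in> M \<Longrightarrow> crosses c d \<Longrightarrow> (c, d) \<in> conn_rel M"
  unfolding conn_rel_def by (rule r_into_rtrancl) auto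

lemma conn_rel_mono: "A \<subseteq> B \<Longrightarrow> (c, d) \<in> conn_rel A \<Longrightarrow> (c, d) \<in> conn_rel B"
  unfolding conn_rel_def by (erule rtrancl_mono[THEN subsetD, rotated]) auto

lemma conn_rel_in: "(c, d) \<in> conn_rel M \<Longrightarrow> c \<in> M \<Longrightarrow> d \<in> M"
  unfolding conn_rel_def by (induction rule: rtrancl_induct) auto

lemma conn_rel_noncrossing_closed:
  assumes "noncrossing X (M - X)" "X \<subseteq> M" "(c, d) \<in> conn_rel M" "c \<in> X"
  shows "d \<in> X \<and> (c, d) \<in> conn_rel X"
  using assms(3) unfolding conn_rel_def
proof (induction rule: rtrancl_induct)
  case base
  then show ?case using assms(4) by simp
next
  case (step y z)
  then have y: "y \<in> X" "(c, y) \<in> conn_rel X" by (auto simp: conn_rel_def)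
  show ?case
  proof (cases "y = z")
    case False
    with step have "z \<in> M" "crosses y z" by auto
    with y assms(1) have "z \<in> X" unfolding noncrossing_def by blast
    with y \<open>crosses y z\<close> show ?thesis
      by (auto simp: conn_rel_def[symmetric] intro: conn_rel_trans conn_rel_crosses)
  qed (use step y in \<open>auto simp: conn_rel_def\<close>)
qed

lemma conn_rel_reaches_neighbour:
  assumes "(c, r) \<in> conn_rel M" "c \<noteq> r"
  shows "\<exists>d\<in>M - {r}. (c, d) \<in> conn_rel (M - {r}) \<and> crosses d r"
  using assms unfolding conn_rel_def
proof (induction rule: converse_rtrancl_induct)
  case (step c c')
  show ?case
  proof (cases "c = c'")
    case True
    then show ?thesis using step by simp
  next
    case False
    then have c: "c \<in> M" "c' \<in> M" "crosses c c'" using step(1) by auto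
    show ?thesis
    proof (cases "c' = r")
      case True
      then show ?thesis using c step(4) by (auto simp: conn_rel_def[symmetric])
    next
      case False
      with step obtain d where d: "d \<in> M - {r}" "(c', d) \<in> conn_rel (M - {r})" "crosses d r"
        unfolding conn_rel_def by blast
      have "(c, c') \<in> conn_rel (M - {r})"
        using c False step(4) by (simp add: conn_rel_crosses)
      then show ?thesis
        using d conn_rel_trans[of c c' "M - {r}" d] unfolding conn_rel_def by blast
    qed
  qed
qed simp

lemma connected_diagramI:
  assumes "z \<in> A" "\<And>x. x \<in> A \<Longrightarrow> (x, z) \<in> conn_rel A"
  shows "connected_diagram A"
  unfolding connected_diagram_def using assms by (meson conn_rel_sym conn_rel_trans empty_iff)

lemma connected_Un_crossing:
  assumes "connected_diagram A" "connected_diagram B" "a \<in> A" "b \<in> B" "crosses a b"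
  shows "connected_diagram (A \<union> B)"
proof (rule connected_diagramI)
  show "a \<in> A \<union> B" using assms(3) by simp
  have ba: "(b, a) \<in> conn_rel (A \<union> B)"
    using assms(3-5) by (simp add: conn_rel_crosses crosses_sym)
  fix x assume "x \<in> A \<union> B"
  then show "(x, a) \<in> conn_rel (A \<union> B)"
  proof
    assume "x \<in> A"
    then show ?thesis
      using assms(1,3) conn_rel_mono[of A "A \<union> B"] unfolding connected_diagram_def by blast
  next
    assume "x \<in> B"
    then have "(x, b) \<in> conn_rel (A \<union> B)"
      using assms(2,4) conn_rel_mono[of B "A \<union> B"] unfolding connected_diagram_def by blast
    then show ?thesis using ba by (rule conn_rel_trans)
  qed
qed

lemma connected_subset_noncrossing_closed:
  assumes "connected_diagram A" "A \<subseteq> M" "noncrossing X (M - X)" "X \<subseteq> M" "a \<in> A" "a \<in> X"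
  shows "A \<subseteq> X"
proof
  fix y assume "y \<in> A"
  then have "(a, y) \<in> conn_rel M"
    using assms(1,2,5) conn_rel_mono unfolding connected_diagram_def by blast
  then show "y \<in> X" using conn_rel_noncrossing_closed[OF assms(3,4)] assms(6) by blast
qed

lemma component_self: "c \<in> component M c"
  by (simp add: component_def)

lemma component_subset: "c \<in> M \<Longrightarrow> component M c \<subseteq> M"
  unfolding component_def using conn_rel_in by blast

lemma noncrossing_component: "c \<in> M \<Longrightarrow> noncrossing (component M c) (M - component M c)"
  unfolding noncrossing_def component_def
  by (blast intro: conn_rel_trans conn_rel_crosses dest: conn_rel_in)

lemma connected_component:
  assumes "c \<in> M"
  shows "connected_diagram (component M c)"
proof (rule connected_diagramI[OF component_self])
  fix x assume x: "x \<in> component M c"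
  then have "(x, c) \<in> conn_rel M" by (simp add: component_def conn_rel_sym)
  then show "(x, c) \<in> conn_rel (component M c)"
    using conn_rel_noncrossing_closed[OF noncrossing_component[OF assms] component_subset[OF assms]]
      x by blast
qed

lemma component_eq_connected:
  assumes "connected_diagram A" "noncrossing A (M - A)" "A \<subseteq> M" "x \<in> A"
  shows "component M x = A"
proof
  show "component M x \<subseteq> A"
    unfolding component_def using conn_rel_noncrossing_closed[OF assms(2,3) _ assms(4)] by blast
  show "A \<subseteq> component M x"
    unfolding component_def using assms(1,4) conn_rel_mono[OF assms(3)]
    unfolding connected_diagram_def by blast
qed

lemma components_eq_image: "components M = component M ` M"
  unfolding components_def quotient_def component_def by blast

lemma card_2_other_eq: "card S = 2 \<Longrightarrow> r \<in> S \<Longrightarrow> a \<in> S \<Longrightarrow> b \<in> S \<Longrightarrow> a \<noteq> r \<Longrightarrow> b \<noteq> r \<Longrightarrow> a = b"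
  by (auto simp: card_2_iff)

lemma components_Un_noncrossing:
  assumes "M = A \<union> B" "A \<inter> B = {}" "connected_diagram A" "connected_diagram B" "noncrossing A B"
  shows "components M = {A, B}"
proof -
  have "noncrossing A (M - A)" "noncrossing B (M - B)"
    using assms(1,2,5) by (auto simp: noncrossing_def crosses_sym)
  then have "component M ` A = {A}" "component M ` B = {B}"
    using component_eq_connected assms(1,3,4) by (auto simp: connected_diagram_def)
  then show ?thesis unfolding components_eq_image assms(1) image_Un by auto
qed

lemma card_components_Un_noncrossing:
  assumes "M = A \<union> B" "A \<inter> B = {}" "connected_diagram A" "connected_diagram B" "noncrossing A B"
  shows "card (components M) = 2"
proof -
  have "A \<noteq> B" using assms(2,3) by (auto simp: connected_diagram_def)
  then show ?thesis using components_Un_noncrossing[OF assms] by simp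
qed

lemma connected_crosses_chord:
  assumes K: "connected_diagram K" "matching K"
    and st: "s < t" "s \<notin> points K" "t \<notin> points K"
    and p: "p \<in> points K" "s < p" "p < t"
    and q: "q \<in> points K" "q < s \<or> t < q"
  shows "\<exists>k\<in>K. crosses k (s, t)"
proof (rule ccontr)
  assume no_cross: "\<not> (\<exists>k\<in>K. crosses k (s, t))"
  have both: "(s < fst k \<and> fst k < t) = (s < snd k \<and> snd k < t)" if "k \<in> K" for k
  proof -
    have "fst k < snd k" "\<not> crosses k (s, t)" using matching_less[OF K(2) that] no_cross that by auto
    moreover have "fst k \<noteq> s" "fst k \<noteq> t" "snd k \<noteq> s" "snd k \<noteq> t"
      using st fst_in_points[OF that] snd_in_points[OF that] by auto
    ultimately show ?thesis unfolding crosses_def by auto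
  qed
  define X where "X = {k\<in>K. s < fst k \<and> fst k < t}"
  have "noncrossing X (K - X)"
    unfolding noncrossing_def
  proof (intro ballI notI)
    fix x y assume "x \<in> X" "y \<in> K - X" "crosses x y"
    then show False
      using both[of x] both[of y] unfolding X_def crosses_def by auto
  qed
  moreover obtain kp where kp: "kp \<in> K" "p = fst kp \<or> p = snd kp" using p(1) by (rule pointsE)
  moreover obtain kq where kq: "kq \<in> K" "q = fst kq \<or> q = snd kq" using q(1) by (rule pointsE)
  moreover have "(kp, kq) \<in> conn_rel K" using K(1) kp kq unfolding connected_diagram_def by blast
  moreover have "kp \<in> X" "kq \<notin> X" using kp kq both[of kp] both[of kq] p q unfolding X_def by auto
  ultimately show False using conn_rel_noncrossing_closed[of X K kp kq] unfolding X_def by blast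
qed
subsection \<open>Relabelling the points\<close>

lemma relabel_chord_strict_mono:
  assumes "strict_mono_on A f" "fst c \<in> A" "snd c \<in> A" "fst c < snd c"
  shows "relabel_chord f c = (f (fst c), f (snd c))"
  using assms by (auto simp: relabel_chord_def dest: strict_mono_onD)

lemma crosses_relabel_chord:
  assumes "strict_mono_on A f" "matching M" "c \<in> M" "d \<in> M" "points M \<subseteq> A"
  shows "crosses (relabel_chord f c) (relabel_chord f d) = crosses c d"
proof -
  have A: "fst c \<in> A" "snd c \<in> A" "fst d \<in> A" "snd d \<in> A"
    using assms(3-5) fst_in_points snd_in_points by blast+
  have "relabel_chord f c = (f (fst c), f (snd c))" "relabel_chord f d = (f (fst d), f (snd d))"
    using relabel_chord_strict_mono[OF assms(1)] A matching_less[OF assms(2)] assms(3,4) by auto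
  then show ?thesis unfolding crosses_def using strict_mono_on_less[OF assms(1)] A by auto
qed

lemma ends_relabel_chord:
  "{fst (relabel_chord f c), snd (relabel_chord f c)} = f ` {fst c, snd c}"
  by (auto simp: relabel_chord_def min_def max_def)

lemma points_relabel: "points (relabel f A) = f ` points A"
  unfolding points_def relabel_def by (simp add: ends_relabel_chord image_UN)

lemma relabel_Un [simp]: "relabel f (A \<union> B) = relabel f A \<union> relabel f B"
  and relabel_insert [simp]: "relabel f (insert c A) = insert (relabel_chord f c) (relabel f A)"
  by (auto simp: relabel_def)

lemma relabel_chord_in_relabel: "c \<in> A \<Longrightarrow> relabel_chord f c \<in> relabel f A"
  by (simp add: relabel_def)

lemma connected_relabel:
  assumes "strict_mono_on (points A) f" "matching A" "connected_diagram A"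
  shows "connected_diagram (relabel f A)"
proof -
  have "(relabel_chord f x, relabel_chord f y) \<in> conn_rel (relabel f A)"
    if "(x, y) \<in> conn_rel A" for x y
    using that unfolding conn_rel_def
  proof (induction rule: rtrancl_induct)
    case (step y z)
    show ?case
    proof (cases "y = z")
      case False
      then have "y \<in> A" "z \<in> A" "crosses y z" using step by auto
      then have "(relabel_chord f y, relabel_chord f z) \<in> conn_rel (relabel f A)"
        using crosses_relabel_chord[OF assms(1,2)]
        by (simp add: conn_rel_crosses relabel_chord_in_relabel)
      then show ?thesis using step(3) unfolding conn_rel_def by simp
    qed (use step in simp)
  qed simp
  then show ?thesis
    using assms(3) unfolding connected_diagram_def relabel_def by blast
qed

lemma noncrossing_relabel:
  assumes "strict_mono_on (points A \<union> points B) f" "matching (A \<union> B)" "noncrossing A B"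
  shows "noncrossing (relabel f A) (relabel f B)"
  using assms crosses_relabel_chord[OF assms(1,2)] by (auto simp: noncrossing_def relabel_def)

lemma matching_relabel:
  assumes "inj_on f (points A)" "matching A"
  shows "matching (relabel f A)"
  unfolding matching_def relabel_def
proof (intro conjI ballI impI)
  have sub: "{fst c, snd c} \<subseteq> points A" if "c \<in> A" for c
    using that fst_in_points snd_in_points by blast
  fix x assume "x \<in> relabel_chord f ` A"
  then obtain c where c: "c \<in> A" "x = relabel_chord f c" by blast
  have "f (fst c) \<noteq> f (snd c)"
    using inj_onD[OF assms(1)] matching_less[OF assms(2) c(1)] sub[OF c(1)] by fastforce
  then show "fst x < snd x" using c(2) by (auto simp: relabel_chord_def min_def max_def)
  fix y assume "y \<in> relabel_chord f ` A" "x \<noteq> y"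
  then obtain d where d: "d \<in> A" "y = relabel_chord f d" "c \<noteq> d" using c by blast
  have "{fst c, snd c} \<inter> {fst d, snd d} = {}"
    using assms(2) c(1) d unfolding matching_def by blast
  then show "{fst x, snd x} \<inter> {fst y, snd y} = {}"
    using inj_on_image_Int[OF assms(1) sub[OF c(1)] sub[OF d(1)]] c(2) d(2)
    by (simp add: ends_relabel_chord)
qed

lemma relabel_relabel_inverse:
  assumes "\<And>x. x \<in> points M \<Longrightarrow> g (f x) = x" "matching M"
  shows "relabel g (relabel f M) = M"
proof -
  have "relabel_chord g (relabel_chord f c) = c" if "c \<in> M" for c
    using assms(1)[OF fst_in_points[OF that]] assms(1)[OF snd_in_points[OF that]]
      matching_less[OF assms(2) that]
    by (auto simp: relabel_chord_def min_def max_def prod_eq_iff)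
  then show ?thesis unfolding relabel_def image_image by simp
qed

lemma chord_diagram_relabel:
  assumes "chord_diagram n M" "bij_betw f {1..2*n} {1..2*n}"
  shows "chord_diagram n (relabel f M)"
  using assms matching_relabel points_relabel
  unfolding chord_diagram_iff bij_betw_def by metis

lemma card_points:
  assumes "finite M" "matching M"
  shows "card (points M) = 2 * card M"
  using assms
proof (induction M rule: finite_induct)
  case (insert c M)
  then have "matching M" using matching_subset by blast
  moreover have "fst c \<notin> points M" "snd c \<notin> points M"
    using matching_not_in_points[OF insert(4), of c M] insert(2) by auto
  moreover have "fst c \<noteq> snd c" using matching_less[OF insert(4)] by fastforce
  ultimately show ?case using insert by simp
qed simp

lemma chord_diagram_card: "chord_diagram n M \<Longrightarrow> finite M \<and> card M = n"
proof -
  assume "chord_diagram n M"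
  then have M: "matching M" "points M = {1..2*n}" by (auto simp: chord_diagram_iff)
  have "M \<subseteq> points M \<times> points M"
    using fst_in_points snd_in_points by (fastforce simp: mem_Times_iff)
  then have "finite M" using M(2) finite_subset by fastforce
  then show "finite M \<and> card M = n" using card_points[OF _ M(1)] M(2) by simp
qed

lemma indecomposable_iff_points:
  "indecomposable n M \<longleftrightarrow> \<not> (\<exists>k. 0 < k \<and> k < n \<and> (\<exists>S\<subseteq>M. {1..2*k} = points S))"
proof -
  have "(\<Union>(a, b)\<in>S. {a, b}) = points S" for S
    by (simp add: points_def split_beta)
  then show ?thesis unfolding indecomposable_def by simp
qed

lemma not_indecomposable_if_initial_segment:
  assumes "chord_diagram n M" "A \<subseteq> M" "A \<noteq> {}" "A \<noteq> M" "points A = {1..j}"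
  shows "\<not> indecomposable n M"
proof -
  have M: "finite M" "card M = n" "matching M"
    using assms(1) chord_diagram_card chord_diagram_iff by blast+
  then have "finite A" "matching A" using assms(2) finite_subset matching_subset by blast+
  then have "j = 2 * card A" using card_points assms(5) by (metis card_atLeastAtMost diff_Suc_1)
  moreover have "0 < card A" using \<open>finite A\<close> assms(3) by (simp add: card_gt_0_iff)
  moreover have "card A < n" using M assms(2,4) psubset_card_mono by blast
  ultimately show ?thesis unfolding indecomposable_iff_points using assms(2,5) by metis
qed

lemma noncrossing_initial_segment:
  assumes "chord_diagram n M" "S \<subseteq> M" "points S = {1..2*k}"
  shows "noncrossing S (M - S)"
proof -
  have M: "matching M" "points M = {1..2*n}" using assms(1) chord_diagram_iff by blast+
  have "2*k < fst d \<and> 2*k < snd d" if "d \<in> M - S" for d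
    using matching_not_in_points[OF M(1), of d S] fst_in_points[of d M] snd_in_points[of d M]
      that assms(2,3) M(2) by fastforce
  moreover have "snd c \<le> 2*k" if "c \<in> S" for c
    using snd_in_points[OF that] assms(3) by simp
  ultimately show ?thesis
    unfolding noncrossing_def crosses_def using matching_less[OF M(1)] assms(2) by fastforce
qed

text \<open>An initial segment containing 1 contains all of \<open>A\<close>, hence the point \<open>y\<close>, hence all of \<open>B\<close>.\<close>
lemma indecomposable_if_overlapping:
  assumes "chord_diagram n M" "M = A \<union> B" "connected_diagram A" "connected_diagram B"
    and "1 \<in> points A" "x \<in> points A" "y \<in> points B" "y < x"
  shows "indecomposable n M"
  unfolding indecomposable_iff_points
proof
  assume "\<exists>k. 0 < k \<and> k < n \<and> (\<exists>S\<subseteq>M. {1..2*k} = points S)"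
  then obtain k S where k: "k < n" "S \<subseteq> M" "points S = {1..2*k}" "0 < k" by metis
  have M: "matching M" "points M = {1..2*n}" using assms(1) chord_diagram_iff by blast+
  have closed: "noncrossing S (M - S)" using noncrossing_initial_segment assms(1) k(2,3) by blast
  have in_S: "C \<subseteq> S" if C: "C \<subseteq> M" "connected_diagram C" "z \<in> points C" "z \<le> 2*k" for C z
  proof -
    have "z \<in> points M" using C(1,3) points_mono by blast
    then have "z \<in> points S" using M(2) k(3) C(4) by simp
    then obtain d where d: "d \<in> S" "z = fst d \<or> z = snd d" by (rule pointsE)
    obtain c where c: "c \<in> C" "z = fst c \<or> z = snd c" using C(3) by (rule pointsE)
    have "c = d" using matching_eqI[OF M(1), of c d z] c d C(1) k(2) by auto
    then show ?thesis
      using connected_subset_noncrossing_closed[OF C(2,1) closed k(2)] c d by blast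
  qed
  have "A \<subseteq> S" using in_S[of A 1] assms(2,3,5) k(4) by simp
  then have "x \<le> 2*k" using points_mono[OF \<open>A \<subseteq> S\<close>] assms(6) k(3) by auto
  then have "B \<subseteq> S" using in_S[of B y] assms(2,4,7,8) by simp
  with \<open>A \<subseteq> S\<close> have "points M \<subseteq> points S" using assms(2) points_mono by simp
  then show False using M(2) k(1,3) by auto
qed

definition move_to_front :: "nat \<Rightarrow> nat \<Rightarrow> nat" where
  "move_to_front m x = (if x < m then x + 1 else if x = m then 1 else x)"

definition move_front_to :: "nat \<Rightarrow> nat \<Rightarrow> nat" where
  "move_front_to u x = (if x = 1 then u else if x \<le> u then x - 1 else x)"

lemma move_to_front_move_front_to: "1 \<le> x \<Longrightarrow> 1 \<le> u \<Longrightarrow> move_to_front u (move_front_to u x) = x"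
  and move_front_to_move_to_front: "1 \<le> x \<Longrightarrow> 1 \<le> u \<Longrightarrow> move_front_to u (move_to_front u x) = x"
  by (auto simp: move_to_front_def move_front_to_def)

lemma bij_betw_move_front_to: "1 \<le> u \<Longrightarrow> u \<le> N \<Longrightarrow> bij_betw (move_front_to u) {1..N} {1..N}"
  by (rule bij_betw_byWitness[where f' = "move_to_front u"])
    (auto simp: move_to_front_def move_front_to_def)

lemma bij_betw_move_to_front: "1 \<le> m \<Longrightarrow> m \<le> N \<Longrightarrow> bij_betw (move_to_front m) {1..N} {1..N}"
  by (rule bij_betw_byWitness[where f' = "move_front_to m"])
    (auto simp: move_to_front_def move_front_to_def)

lemma strict_mono_on_move_front_to:
  "strict_mono_on {2..} (move_front_to u)" "strict_mono_on (insert 1 {u<..}) (move_front_to u)"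
  by (auto intro!: strict_mono_onI simp: move_front_to_def)

lemma strict_mono_on_move_to_front:
  "strict_mono_on ({1..} - {m}) (move_to_front m)" "1 \<le> m \<Longrightarrow> strict_mono_on {m..} (move_to_front m)"
  by (intro strict_mono_onI; simp add: move_to_front_def)+

subsection \<open>The two maps\<close>

definition split_point :: "chord set \<Rightarrow> nat" where
  "split_point D = Max {x \<in> points (component (D - {chord_at D 1}) (chord_at D 2)).
                          x < snd (chord_at D 1)}"

definition split_diagram :: "chord set \<Rightarrow> chord set" where
  "split_diagram D = relabel (move_front_to (split_point D)) D"

definition join_point :: "chord set \<Rightarrow> nat" where
  "join_point I = Min (points (I - component I (chord_at I 1)))"

definition join_diagram :: "chord set \<Rightarrow> chord set" where
  "join_diagram I = relabel (move_to_front (join_point I)) I"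

locale connected_split =
  fixes n :: nat and D :: "chord set"
  assumes two_le_n: "2 \<le> n"
    and diagram: "chord_diagram n D"
    and connected: "connected_diagram D"
begin

lemma matching_D: "matching D" and points_D: "points D = {1..2*n}"
  using diagram by (auto simp: chord_diagram_iff)

lemma finite_points_D: "A \<subseteq> D \<Longrightarrow> finite (points A)"
  using points_mono points_D by (metis finite_atLeastAtMost finite_subset)

definition root_end :: nat where
  "root_end = snd (chord_at D 1)"

lemma root: "chord_at D 1 = (1, root_end)" "(1, root_end) \<in> D"
proof -
  have "1 \<in> points D" using points_D two_le_n by simp
  then have c: "chord_at D 1 \<in> D" "1 = fst (chord_at D 1) \<or> 1 = snd (chord_at D 1)"
    using chord_at_in[OF matching_D] by auto
  have "1 \<le> fst (chord_at D 1)" using fst_in_points[OF c(1)] points_D by simp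
  then have "fst (chord_at D 1) = 1" using c(2) matching_less[OF matching_D c(1)] by linarith
  then show "chord_at D 1 = (1, root_end)" unfolding root_end_def by (simp add: prod_eq_iff)
  then show "(1, root_end) \<in> D" using c(1) by simp
qed

definition others :: "chord set" where
  "others = D - {(1, root_end)}"

lemma crosses_root:
  assumes "d \<in> D" "crosses d (1, root_end)"
  shows "1 < fst d \<and> fst d < root_end \<and> root_end < snd d"
  using assms fst_in_points[OF assms(1)] points_D unfolding crosses_def by auto

lemma others_reach_root:
  assumes "c \<in> others"
  shows "\<exists>d\<in>others. (c, d) \<in> conn_rel others \<and> crosses d (1, root_end)"
proof -
  have "(c, (1, root_end)) \<in> conn_rel D"
    using connected assms root(2) unfolding connected_diagram_def others_def by blast
  then show ?thesis using conn_rel_reaches_neighbour assms unfolding others_def by blast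
qed

lemma three_le_root_end: "3 \<le> root_end"
proof -
  have "others \<noteq> {}"
  proof
    assume "others = {}"
    then have "D = {(1, root_end)}" using root(2) unfolding others_def by auto
    then have "points D = points {(1, root_end)}" by (rule arg_cong)
    then have "points D = {1, root_end}" by simp
    moreover have "card {1, root_end} \<le> 2" by (cases "root_end = 1") auto
    ultimately have "card {1..2*n} \<le> 2" using points_D by simp
    then show False using two_le_n by simp
  qed
  then obtain c where "c \<in> others" by blast
  then obtain d where "d \<in> others" "crosses d (1, root_end)" using others_reach_root by blast
  then show ?thesis using crosses_root unfolding others_def by fastforce
qed

lemma chord_at_two: "chord_at D 2 \<in> others" "2 \<in> points {chord_at D 2}"
proof -
  have "2 \<in> points D" using points_D two_le_n by simp
  then have c: "chord_at D 2 \<in> D" "2 = fst (chord_at D 2) \<or> 2 = snd (chord_at D 2)"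
    using chord_at_in[OF matching_D] by blast+
  moreover have "chord_at D 2 \<noteq> (1, root_end)" using c(2) three_le_root_end by auto
  ultimately show "chord_at D 2 \<in> others" "2 \<in> points {chord_at D 2}"
    unfolding others_def by auto
qed

definition block :: "chord set" where
  "block = component others (chord_at D 2)"

definition rest :: "chord set" where
  "rest = others - block"

lemma block_subset: "block \<subseteq> others"
  and connected_block: "connected_diagram block"
  and noncrossing_block_rest: "noncrossing block rest"
  unfolding block_def rest_def using chord_at_two(1)
  by (rule component_subset, rule connected_component, rule noncrossing_component)

lemma two_in_points_block: "2 \<in> points block"
  using chord_at_two(2) points_mono component_self unfolding block_def by blast

lemma block_crosses_root: "\<exists>d\<in>block. crosses d (1, root_end)"
  using others_reach_root[OF chord_at_two(1)] unfolding block_def component_def by blast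

lemma split_point_eq: "split_point D = Max {x \<in> points block. x < root_end}"
  unfolding split_point_def root(1) by (simp add: block_def others_def)

lemma split_point: "split_point D \<in> points block" "split_point D < root_end"
  and le_split_point: "x \<in> points block \<Longrightarrow> x < root_end \<Longrightarrow> x \<le> split_point D"
proof -
  have fin: "finite {x \<in> points block. x < root_end}"
    using finite_points_D block_subset unfolding others_def by auto
  have "{x \<in> points block. x < root_end} \<noteq> {}"
    using two_in_points_block three_le_root_end by auto
  then show "split_point D \<in> points block" "split_point D < root_end"
    using Max_in[OF fin] unfolding split_point_eq by auto
  show "x \<in> points block \<Longrightarrow> x < root_end \<Longrightarrow> x \<le> split_point D"
    using Max_ge[OF fin] unfolding split_point_eq by auto
qed

lemma two_le_split_point: "2 \<le> split_point D"
  using le_split_point[OF two_in_points_block] three_le_root_end by simp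

lemma points_block_subset: "points block \<subseteq> {1..2*n}"
  using block_subset points_mono points_D unfolding others_def by blast

lemma split_point_le: "split_point D \<le> 2*n"
  using split_point(1) points_block_subset by auto

lemma not_root_points:
  assumes "A \<subseteq> others"
  shows "1 \<notin> points A" "root_end \<notin> points A"
proof -
  have "A \<subseteq> D" "(1, root_end) \<notin> A" using assms unfolding others_def by auto
  from matching_not_in_points[OF matching_D root(2) this]
  show "1 \<notin> points A" "root_end \<notin> points A" by simp_all
qed

lemma points_block_ge2:
  assumes "x \<in> points block"
  shows "2 \<le> x"
proof -
  have "1 \<le> x" "x \<noteq> 1" using assms points_block_subset not_root_points(1)[OF block_subset] by auto
  then show ?thesis by simp
qed

lemma points_block_above: "x \<in> points block \<Longrightarrow> split_point D < x \<Longrightarrow> root_end < x"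
  using le_split_point not_root_points(2)[OF block_subset] by (metis linorder_neqE_nat not_le)

lemma rest_subset: "rest \<subseteq> others"
  unfolding rest_def by blast

lemma noncrossing_rest: "noncrossing rest (others - rest)"
proof -
  have "others - rest = block" using block_subset unfolding rest_def by blast
  then show ?thesis using noncrossing_block_rest noncrossing_sym by simp
qed

text \<open>The component \<open>block\<close> has the points 2 and \<open>split_point D\<close>, so no chord outside
  it can start between them without crossing it.\<close>
lemma rest_chord_above:
  assumes "z \<in> rest" "split_point D < snd z"
  shows "split_point D < fst z"
proof (rule ccontr)
  assume "\<not> split_point D < fst z"
  have z: "z \<in> D" "z \<notin> block" "z \<noteq> (1, root_end)"
    using assms(1) rest_subset block_subset unfolding others_def rest_def by auto
  have not_block: "fst z \<notin> points block" "snd z \<notin> points block"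
    using matching_not_in_points[OF matching_D z(1)] block_subset z(2) unfolding others_def by auto
  have "fst z \<noteq> 1" using matching_eqI[OF matching_D z(1) root(2), of 1] z(3) by auto
  moreover have "1 \<le> fst z" using fst_in_points[OF z(1)] points_D by simp
  moreover have "fst z \<noteq> 2" "fst z \<noteq> split_point D"
    using not_block two_in_points_block split_point(1) by auto
  ultimately have between: "2 < fst z" "fst z < split_point D"
    using \<open>\<not> split_point D < fst z\<close> by auto
  have "block \<subseteq> D" using block_subset unfolding others_def by blast
  then obtain k where "k \<in> block" "crosses k (fst z, snd z)"
    using connected_crosses_chord[OF connected_block matching_subset[OF matching_D]
        matching_less[OF matching_D z(1)] not_block split_point(1) between(2) assms(2)
        two_in_points_block] between(1) by auto
  then show False using noncrossing_block_rest assms(1) unfolding noncrossing_def by simp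
qed

text \<open>Each chord of \<open>rest\<close> is linked inside \<open>rest\<close> to a chord crossing the root, whose left end
  exceeds \<open>split_point D\<close>; by the previous lemma this property propagates along crossings.\<close>
lemma rest_above:
  assumes "e \<in> rest"
  shows "split_point D < fst e"
proof -
  obtain d where d: "d \<in> others" "(e, d) \<in> conn_rel others" "crosses d (1, root_end)"
    using others_reach_root assms rest_subset by blast
  have "d \<in> rest"
    using conn_rel_noncrossing_closed[OF noncrossing_rest rest_subset d(2) assms] by simp
  define C where "C = component others d"
  have "e \<in> C" using d(2) conn_rel_sym unfolding C_def component_def by blast
  have "C \<subseteq> rest"
    using connected_subset_noncrossing_closed[OF connected_component component_subset
        noncrossing_rest rest_subset component_self \<open>d \<in> rest\<close>] d(1) unfolding C_def by blast
  define X where "X = {y \<in> C. split_point D < fst y}"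
  have "noncrossing X (C - X)"
    unfolding noncrossing_def
  proof (intro ballI notI)
    fix y z assume y: "y \<in> X" and z: "z \<in> C - X" and "crosses y z"
    then have "split_point D < snd z" unfolding X_def crosses_def by auto
    then show False using rest_chord_above z \<open>C \<subseteq> rest\<close> unfolding X_def by blast
  qed
  moreover have "d \<in> X"
    using rest_chord_above[OF \<open>d \<in> rest\<close>] crosses_root[OF _ d(3)] d(1) split_point(2)
      component_self unfolding X_def C_def others_def by fastforce
  ultimately have "C \<subseteq> X"
    using connected_subset_noncrossing_closed[OF connected_component[OF d(1)]]
    unfolding X_def C_def by blast
  then show ?thesis using \<open>e \<in> C\<close> unfolding X_def by blast
qed

lemma points_rest_above:
  assumes "x \<in> points rest"
  shows "split_point D < x"
proof -
  obtain e where e: "e \<in> rest" "x = fst e \<or> x = snd e" using assms by (rule pointsE)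
  have "e \<in> D" using e(1) rest_subset unfolding others_def by blast
  then show ?thesis using rest_above[OF e(1)] e(2) matching_less[OF matching_D] by fastforce
qed

lemma connected_root_rest: "connected_diagram (insert (1, root_end) rest)"
proof (rule connected_diagramI)
  fix x assume "x \<in> insert (1, root_end) rest"
  then consider "x = (1, root_end)" | "x \<in> rest" by blast
  then show "(x, (1, root_end)) \<in> conn_rel (insert (1, root_end) rest)"
  proof cases
    case 2
    then obtain d where d: "d \<in> others" "(x, d) \<in> conn_rel others" "crosses d (1, root_end)"
      using others_reach_root rest_subset by blast
    then have "d \<in> rest" "(x, d) \<in> conn_rel rest"
      using conn_rel_noncrossing_closed[OF noncrossing_rest rest_subset d(2) 2] by auto
    then show ?thesis
      using conn_rel_mono[of rest] conn_rel_crosses[of d _ "(1, root_end)"] d(3)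
      by (meson conn_rel_trans insertI1 insertI2 subset_insertI)
  qed simp
qed simp

definition left_part :: "chord set" where
  "left_part = relabel (move_front_to (split_point D)) block"

definition right_part :: "chord set" where
  "right_part = relabel (move_front_to (split_point D)) (insert (1, root_end) rest)"

lemma D_eq: "D = block \<union> insert (1, root_end) rest"
  using block_subset root(2) unfolding rest_def others_def by blast

lemma split_diagram_eq: "split_diagram D = left_part \<union> right_part"
  unfolding split_diagram_def left_part_def right_part_def by (subst D_eq) simp

lemma right_part_eq:
  "right_part = insert (split_point D, root_end) (relabel (move_front_to (split_point D)) rest)"
  using split_point(2) two_le_split_point
  by (simp add: right_part_def relabel_chord_def move_front_to_def)

lemma strict_mono_block_rest: "strict_mono_on (points block \<union> points rest) (move_front_to (split_point D))"
  using points_block_ge2 points_rest_above two_le_split_point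
  by (intro monotone_on_subset[OF strict_mono_on_move_front_to(1)]) fastforce

lemma connected_left_part: "connected_diagram left_part"
  unfolding left_part_def
  using connected_relabel[OF _ matching_subset[OF matching_D] connected_block]
    monotone_on_subset[OF strict_mono_block_rest] block_subset unfolding others_def by blast

lemma connected_right_part: "connected_diagram right_part"
proof -
  have "points (insert (1, root_end) rest) \<subseteq> insert 1 {split_point D<..}"
    using points_rest_above split_point(2) by auto
  then show ?thesis
    unfolding right_part_def
    using connected_relabel[OF _ matching_subset[OF matching_D] connected_root_rest]
      monotone_on_subset[OF strict_mono_on_move_front_to(2)] D_eq by blast
qed

lemma points_left_part_outside:
  assumes "y \<in> points left_part"
  shows "y < split_point D \<or> root_end < y"
proof -
  obtain x where x: "x \<in> points block" "y = move_front_to (split_point D) x"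
    using assms points_relabel unfolding left_part_def by blast
  show ?thesis
  proof (cases "x \<le> split_point D")
    case True
    then show ?thesis using x points_block_ge2[OF x(1)] by (simp add: move_front_to_def) linarith
  next
    case False
    then show ?thesis
      using x points_block_above[OF x(1)] two_le_split_point by (simp add: move_front_to_def)
  qed
qed

lemma noncrossing_parts: "noncrossing left_part right_part"
proof -
  have "noncrossing left_part (relabel (move_front_to (split_point D)) rest)"
    using noncrossing_relabel[OF strict_mono_block_rest _ noncrossing_block_rest]
      matching_subset[OF matching_D] D_eq unfolding left_part_def by blast
  moreover have "\<not> crosses y (split_point D, root_end)" if "y \<in> left_part" for y
    using points_left_part_outside[OF fst_in_points[OF that]]
      points_left_part_outside[OF snd_in_points[OF that]]
    unfolding crosses_def by auto
  ultimately show ?thesis unfolding right_part_eq noncrossing_def by blast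
qed

lemma bij_betw_split: "bij_betw (move_front_to (split_point D)) {1..2*n} {1..2*n}"
  using bij_betw_move_front_to two_le_split_point split_point_le by simp

lemma parts_disjoint: "left_part \<inter> right_part = {}"
proof -
  let ?f = "move_front_to (split_point D)" and ?R = "insert (1, root_end) rest"
  have sub: "block \<subseteq> D" "?R \<subseteq> D" using D_eq by blast+
  then have range: "points block \<subseteq> {1..2*n}" "points ?R \<subseteq> {1..2*n}"
    using points_mono points_D by blast+
  have "block \<inter> ?R = {}" using block_subset unfolding rest_def others_def by blast
  then have disj: "points block \<inter> points ?R = {}"
    by (rule matching_points_disjoint[OF matching_D sub])
  have "points left_part \<inter> points right_part = ?f ` (points block \<inter> points ?R)"
    unfolding left_part_def right_part_def points_relabel
    by (rule inj_on_image_Int[OF bij_betw_imp_inj_on[OF bij_betw_split] range, symmetric])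
  then have "points left_part \<inter> points right_part = {}" by (simp only: disj image_empty)
  then show ?thesis using fst_in_points by blast
qed

lemma chord_diagram_split: "chord_diagram n (split_diagram D)"
  unfolding split_diagram_def by (rule chord_diagram_relabel[OF diagram bij_betw_split])

lemma one_in_points_left_part: "1 \<in> points left_part"
proof -
  have "move_front_to (split_point D) 2 = 1" using two_le_split_point by (simp add: move_front_to_def)
  then show ?thesis
    using two_in_points_block unfolding left_part_def points_relabel by (metis image_eqI)
qed

lemma indecomposable_split: "indecomposable n (split_diagram D)"
proof -
  obtain d where d: "d \<in> block" "crosses d (1, root_end)" using block_crosses_root by blast
  have "d \<in> D" using d(1) block_subset unfolding others_def by blast
  then have above: "split_point D < snd d"
    using crosses_root d(2) split_point(2) by fastforce
  then have "move_front_to (split_point D) (snd d) = snd d"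
    using two_le_split_point by (simp add: move_front_to_def)
  then have "snd d \<in> points left_part"
    using snd_in_points[OF d(1)] unfolding left_part_def points_relabel by (metis image_eqI)
  moreover have "split_point D \<in> points right_part" unfolding right_part_eq by simp
  ultimately show ?thesis
    using indecomposable_if_overlapping[OF chord_diagram_split split_diagram_eq connected_left_part
        connected_right_part one_in_points_left_part] above by blast
qed

lemma split_diagram_mem: "split_diagram D \<in> indec_two_comp_diagrams n"
  unfolding indec_two_comp_diagrams_def
  using chord_diagram_split indecomposable_split
    card_components_Un_noncrossing[OF split_diagram_eq parts_disjoint connected_left_part
      connected_right_part noncrossing_parts]
  by simp

lemma min_points_right_part: "Min (points right_part) = split_point D"
proof (rule Min_eqI)
  have "finite (split_diagram D)" using chord_diagram_split chord_diagram_card by blast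
  then show "finite (points right_part)" using split_diagram_eq by simp
  show "split_point D \<in> points right_part" unfolding right_part_eq by simp
  fix y assume "y \<in> points right_part"
  then consider "y = split_point D" | "y = root_end"
    | x where "x \<in> points rest" "y = move_front_to (split_point D) x"
    unfolding right_part_eq by (auto simp: points_relabel)
  then show "split_point D \<le> y"
  proof cases
    case (3 x)
    then show ?thesis using points_rest_above[OF 3(1)] by (simp add: move_front_to_def)
  qed (use split_point(2) in auto)
qed

lemma join_point_split_diagram: "join_point (split_diagram D) = split_point D"
proof -
  let ?I = "split_diagram D"
  obtain c where c: "c \<in> left_part" "1 = fst c \<or> 1 = snd c"
    using one_in_points_left_part by (rule pointsE)
  have "chord_at ?I 1 = c"
    using chord_at_eq c chord_diagram_split split_diagram_eq by (simp add: chord_diagram_iff)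
  moreover have "?I - left_part = right_part" using split_diagram_eq parts_disjoint by blast
  moreover have "component ?I c = left_part"
    using component_eq_connected[OF connected_left_part _ _ c(1)] noncrossing_parts
      split_diagram_eq calculation(2) by simp
  ultimately show ?thesis unfolding join_point_def by (simp add: min_points_right_part)
qed


lemma join_split_diagram: "join_diagram (split_diagram D) = D"
  unfolding join_diagram_def join_point_split_diagram unfolding split_diagram_def
  using two_le_split_point points_D
  by (intro relabel_relabel_inverse[OF _ matching_D] move_to_front_move_front_to) auto
end

locale indecomposable_join =
  fixes n :: nat and I :: "chord set"
  assumes member: "I \<in> indec_two_comp_diagrams n"
begin

lemma diagram: "chord_diagram n I"
  and indecomposable: "indecomposable n I"
  and two_components: "card (components I) = 2"
  using member unfolding indec_two_comp_diagrams_def by auto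

lemma matching_I: "matching I" and points_I: "points I = {1..2*n}"
  using diagram by (auto simp: chord_diagram_iff)

lemma chord_at_one: "chord_at I 1 \<in> I" "1 \<in> points {chord_at I 1}"
proof -
  have "I \<noteq> {}" using two_components unfolding components_eq_image by auto
  then obtain c where "c \<in> I" by blast
  then have "fst c \<in> {1..2*n}" using fst_in_points points_I by blast
  then have "1 \<in> points I" using points_I by simp
  then show "chord_at I 1 \<in> I" "1 \<in> points {chord_at I 1}"
    using chord_at_in[OF matching_I] by auto
qed

definition first_comp :: "chord set" where
  "first_comp = component I (chord_at I 1)"

definition second_comp :: "chord set" where
  "second_comp = I - first_comp"

lemma first_comp_subset: "first_comp \<subseteq> I"
  and connected_first_comp: "connected_diagram first_comp"
  and noncrossing_comps: "noncrossing first_comp second_comp"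
  unfolding first_comp_def second_comp_def using chord_at_one(1)
  by (rule component_subset, rule connected_component, rule noncrossing_component)

lemma one_in_points_first_comp: "1 \<in> points first_comp"
  using chord_at_one(2) points_mono component_self unfolding first_comp_def by blast

lemma I_eq: "I = first_comp \<union> second_comp"
  and comps_disjoint: "first_comp \<inter> second_comp = {}"
  using first_comp_subset unfolding second_comp_def by blast+

lemma points_I_eq: "points I = points first_comp \<union> points second_comp"
  using I_eq points_Un by metis

lemma points_comps_disjoint: "points first_comp \<inter> points second_comp = {}"
  using matching_points_disjoint[OF matching_I first_comp_subset _ comps_disjoint]
  unfolding second_comp_def by blast

lemma component_first_comp: "x \<in> first_comp \<Longrightarrow> component I x = first_comp"
  using component_eq_connected[OF connected_first_comp _ first_comp_subset] noncrossing_comps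
  unfolding second_comp_def by blast

lemma first_comp_in_components: "first_comp \<in> components I"
  unfolding components_eq_image first_comp_def using chord_at_one(1) by (rule imageI)

lemma second_comp_nonempty: "second_comp \<noteq> {}"
proof
  assume "second_comp = {}"
  then have "component I x = first_comp" if "x \<in> I" for x
    using component_first_comp that unfolding second_comp_def by blast
  then have "components I = (\<lambda>_. first_comp) ` I"
    unfolding components_eq_image by (rule image_cong[OF refl])
  then have "components I = {first_comp}" using chord_at_one(1) by auto
  then show False using two_components by simp
qed

lemma component_second_comp:
  assumes "x \<in> second_comp" "y \<in> second_comp"
  shows "component I x = component I y"
proof (rule card_2_other_eq[OF two_components first_comp_in_components])
  show "component I x \<in> components I" "component I y \<in> components I"
    using assms unfolding components_eq_image second_comp_def by blast+
  show "component I x \<noteq> first_comp" "component I y \<noteq> first_comp"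
    using assms component_self comps_disjoint by blast+
qed

lemma connected_second_comp: "connected_diagram second_comp"
proof -
  obtain c where c: "c \<in> second_comp" using second_comp_nonempty by blast
  have closed: "noncrossing second_comp (I - second_comp)"
  proof -
    have "I - second_comp = first_comp" using first_comp_subset unfolding second_comp_def by blast
    then show ?thesis using noncrossing_comps noncrossing_sym by simp
  qed
  show ?thesis
  proof (rule connected_diagramI[OF c])
    fix x assume x: "x \<in> second_comp"
    have "c \<in> component I x" using component_second_comp[OF x c] component_self[of c I] by simp
    then have "(x, c) \<in> conn_rel I" unfolding component_def by simp
    then show "(x, c) \<in> conn_rel second_comp"
      using conn_rel_noncrossing_closed[OF closed _ _ x] unfolding second_comp_def by blast
  qed
qed

lemma join_point_eq: "join_point I = Min (points second_comp)"
  unfolding join_point_def second_comp_def first_comp_def ..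

lemma join_point: "join_point I \<in> points second_comp"
  and join_point_le: "x \<in> points second_comp \<Longrightarrow> join_point I \<le> x"
proof -
  have "finite (points second_comp)"
    using points_I_eq points_I by (metis finite_Un finite_atLeastAtMost)
  moreover have "points second_comp \<noteq> {}"
    using connected_second_comp fst_in_points unfolding connected_diagram_def by blast
  ultimately show "join_point I \<in> points second_comp"
    and "x \<in> points second_comp \<Longrightarrow> join_point I \<le> x"
    unfolding join_point_eq by (simp_all add: Min_in)
qed

definition join_end :: nat where
  "join_end = snd (chord_at I (join_point I))"

lemma join_chord: "(join_point I, join_end) \<in> second_comp" "join_point I < join_end"
proof -
  obtain q where q: "q \<in> second_comp" "join_point I = fst q \<or> join_point I = snd q"
    using join_point by (rule pointsE)
  have qI: "q \<in> I" using q(1) unfolding second_comp_def by blast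
  have "join_point I \<le> fst q" using join_point_le[OF fst_in_points[OF q(1)]] .
  moreover have less: "fst q < snd q" using matching_less[OF matching_I qI] .
  ultimately have "fst q = join_point I" using q(2) by linarith
  moreover have "snd q = join_end"
    unfolding join_end_def using chord_at_eq[OF matching_I qI q(2)] by simp
  ultimately have "q = (join_point I, join_end)" by (simp add: prod_eq_iff)
  then show "(join_point I, join_end) \<in> second_comp" "join_point I < join_end"
    using q(1) less by auto
qed

lemma two_le_join_point: "2 \<le> join_point I"
  and join_point_le_card: "join_point I \<le> 2*n"
proof -
  have "join_point I \<in> points I" unfolding points_I_eq using join_point by (rule UnI2)
  moreover have "join_point I \<noteq> 1"
  proof
    assume "join_point I = 1"
    then have "1 \<in> points second_comp" using join_point by simp
    then show False using one_in_points_first_comp points_comps_disjoint by blast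
  qed
  ultimately show "2 \<le> join_point I" "join_point I \<le> 2*n" using points_I by auto
qed

lemma below_join_point:
  assumes "1 \<le> x" "x < join_point I"
  shows "x \<in> points first_comp"
proof -
  have "x \<in> points I" using assms join_point_le_card points_I by simp
  moreover have "x \<notin> points second_comp" using join_point_le assms(2) by (meson not_le)
  ultimately show ?thesis unfolding points_I_eq by blast
qed

lemma join_ends_not_in_first: "join_point I \<notin> points first_comp" "join_end \<notin> points first_comp"
proof -
  have "join_point I \<in> points second_comp" "join_end \<in> points second_comp"
    using fst_in_points[OF join_chord(1)] snd_in_points[OF join_chord(1)] by simp_all
  then show "join_point I \<notin> points first_comp" "join_end \<notin> points first_comp"
    using points_comps_disjoint by blast+
qed

text \<open>The first component contains 1, outside the join chord, so it cannot reach inside.\<close>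
lemma points_first_comp_outside:
  assumes "x \<in> points first_comp"
  shows "x < join_point I \<or> join_end < x"
proof (rule ccontr)
  assume "\<not> (x < join_point I \<or> join_end < x)"
  moreover have "x \<noteq> join_point I" "x \<noteq> join_end" using assms join_ends_not_in_first by auto
  ultimately have "join_point I < x" "x < join_end" by auto
  then obtain k where "k \<in> first_comp" "crosses k (join_point I, join_end)"
    using connected_crosses_chord[OF connected_first_comp matching_subset[OF matching_I first_comp_subset]
        join_chord(2) join_ends_not_in_first assms _ _ one_in_points_first_comp]
      two_le_join_point by auto
  then show False using noncrossing_comps join_chord(1) unfolding noncrossing_def by blast
qed

lemma first_comp_beyond: "\<exists>p\<in>points first_comp. join_end < p"
proof (rule ccontr)
  assume none: "\<not> ?thesis"
  have "points first_comp \<subseteq> {1..join_point I - 1}"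
  proof
    fix x assume x: "x \<in> points first_comp"
    then have "x \<in> points I" unfolding points_I_eq by (rule UnI1)
    moreover have "x < join_point I" using points_first_comp_outside[OF x] none x by auto
    ultimately show "x \<in> {1..join_point I - 1}" using points_I by auto
  qed
  moreover have "{1..join_point I - 1} \<subseteq> points first_comp"
    using below_join_point two_le_join_point by auto
  moreover have "first_comp \<noteq> {}" using one_in_points_first_comp by auto
  moreover have "first_comp \<noteq> I" using join_chord(1) unfolding second_comp_def by blast
  ultimately show False
    using not_indecomposable_if_initial_segment[OF diagram first_comp_subset] indecomposable by blast
qed

definition left_part :: "chord set" where
  "left_part = relabel (move_to_front (join_point I)) first_comp"

definition right_part :: "chord set" where
  "right_part = relabel (move_to_front (join_point I)) second_comp"

lemma join_diagram_eq: "join_diagram I = left_part \<union> right_part"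
  unfolding join_diagram_def left_part_def right_part_def relabel_def
  by (simp only: image_Un[symmetric] I_eq[symmetric])

lemma bij_betw_join: "bij_betw (move_to_front (join_point I)) {1..2*n} {1..2*n}"
  using bij_betw_move_to_front two_le_join_point join_point_le_card by simp

lemma chord_diagram_join: "chord_diagram n (join_diagram I)"
  unfolding join_diagram_def by (rule chord_diagram_relabel[OF diagram bij_betw_join])

lemma matching_join: "matching (join_diagram I)"
  using chord_diagram_join by (simp add: chord_diagram_iff)

definition second_rest :: "chord set" where
  "second_rest = second_comp - {(join_point I, join_end)}"

lemma right_part_eq:
  "right_part = insert (1, join_end) (relabel (move_to_front (join_point I)) second_rest)"
proof -
  have "relabel_chord (move_to_front (join_point I)) (join_point I, join_end) = (1, join_end)"
    using join_chord(2) by (simp add: relabel_chord_def move_to_front_def)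
  moreover have "second_comp = insert (join_point I, join_end) second_rest"
    using join_chord(1) unfolding second_rest_def by blast
  ultimately show ?thesis unfolding right_part_def by simp
qed

lemma points_first_comp_ge1: "x \<in> points first_comp \<Longrightarrow> 1 \<le> x"
  using points_I unfolding points_I_eq by auto

lemma strict_mono_first_second_rest:
  "strict_mono_on (points first_comp \<union> points second_rest) (move_to_front (join_point I))"
proof (rule monotone_on_subset[OF strict_mono_on_move_to_front(1)])
  have "second_rest \<subseteq> I" "(join_point I, join_end) \<in> I" "(join_point I, join_end) \<notin> second_rest"
    using join_chord(1) unfolding second_rest_def second_comp_def by auto
  then have "join_point I \<notin> points second_rest"
    using matching_not_in_points(1)[OF matching_I] by fastforce
  moreover have "points second_rest \<subseteq> points I"
    using points_mono \<open>second_rest \<subseteq> I\<close> by blast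
  ultimately show "points first_comp \<union> points second_rest \<subseteq> {1..} - {join_point I}"
    using points_first_comp_ge1 join_ends_not_in_first(1) points_I by auto
qed

lemma connected_left_part: "connected_diagram left_part"
  unfolding left_part_def
  using connected_relabel[OF _ matching_subset[OF matching_I first_comp_subset] connected_first_comp]
    monotone_on_subset[OF strict_mono_first_second_rest] by blast

lemma connected_right_part: "connected_diagram right_part"
proof -
  have "strict_mono_on (points second_comp) (move_to_front (join_point I))"
    using monotone_on_subset[OF strict_mono_on_move_to_front(2)] join_point_le two_le_join_point
    by (metis atLeast_iff one_le_numeral order_trans subsetI)
  moreover have "second_comp \<subseteq> I" unfolding second_comp_def by blast
  ultimately show ?thesis
    unfolding right_part_def
    using connected_relabel matching_subset[OF matching_I] connected_second_comp by blast
qed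

lemma move_to_front_first_comp:
  assumes "x \<in> points first_comp"
  shows "move_to_front (join_point I) x = (if x < join_point I then x + 1 else x)"
    and "x \<ge> join_point I \<Longrightarrow> join_end < x"
  using points_first_comp_outside[OF assms] join_chord(2) join_ends_not_in_first(1) assms
  by (auto simp: move_to_front_def)

lemma root_ends_not_in_left_part: "1 \<notin> points left_part" "join_end \<notin> points left_part"
proof -
  have "move_to_front (join_point I) x \<noteq> 1" "move_to_front (join_point I) x \<noteq> join_end"
    if "x \<in> points first_comp" for x
    using move_to_front_first_comp[OF that] points_first_comp_outside[OF that] join_chord(2)
      points_first_comp_ge1[OF that] by auto
  then show "1 \<notin> points left_part" "join_end \<notin> points left_part"
    unfolding left_part_def points_relabel by (metis imageE)+
qed

lemma join_point_in_left_part: "join_point I \<in> points left_part"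
proof -
  have "join_point I - 1 \<in> points first_comp" using below_join_point two_le_join_point by simp
  moreover have "move_to_front (join_point I) (join_point I - 1) = join_point I"
    using two_le_join_point by (simp add: move_to_front_def)
  ultimately show ?thesis unfolding left_part_def points_relabel by (metis image_eqI)
qed

lemma left_part_beyond: "\<exists>p\<in>points left_part. join_end < p"
proof -
  obtain p where p: "p \<in> points first_comp" "join_end < p" using first_comp_beyond by blast
  then have "move_to_front (join_point I) p = p"
    using join_chord(2) by (simp add: move_to_front_def)
  then show ?thesis using p unfolding left_part_def points_relabel by (metis image_eqI)
qed

text \<open>The left part has points on both sides of the new root \<open>(1, join_end)\<close>, so it crosses it.\<close>
lemma connected_join: "connected_diagram (join_diagram I)"
proof -
  obtain p where p: "p \<in> points left_part" "join_end < p" using left_part_beyond by blast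
  have "left_part \<subseteq> join_diagram I" using join_diagram_eq by blast
  then obtain k where k: "k \<in> left_part" "crosses k (1, join_end)"
    using connected_crosses_chord[OF connected_left_part matching_subset[OF matching_join]
        _ root_ends_not_in_left_part join_point_in_left_part _ _ p(1)] p(2)
      two_le_join_point join_chord(2) by auto
  moreover have "(1, join_end) \<in> right_part" unfolding right_part_eq by simp
  ultimately show ?thesis unfolding join_diagram_eq
    using connected_Un_crossing[OF connected_left_part connected_right_part k(1) _ k(2)] by blast
qed

lemma join_diagram_mem: "join_diagram I \<in> connected_diagrams n"
  unfolding connected_diagrams_def using chord_diagram_join connected_join by simp

lemma noncrossing_left_second_rest:
  "noncrossing left_part (relabel (move_to_front (join_point I)) second_rest)"
proof -
  have "first_comp \<union> second_rest \<subseteq> I" using I_eq unfolding second_rest_def by blast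
  moreover have "noncrossing first_comp second_rest"
    using noncrossing_comps unfolding noncrossing_def second_rest_def by blast
  ultimately show ?thesis
    unfolding left_part_def
    using noncrossing_relabel[OF strict_mono_first_second_rest] matching_subset[OF matching_I] by blast
qed

lemma join_root_removed:
  "join_diagram I - {(1, join_end)} = left_part \<union> relabel (move_to_front (join_point I)) second_rest"
proof -
  have "second_rest \<subseteq> I" "(join_point I, join_end) \<in> I" "(join_point I, join_end) \<notin> second_rest"
    using join_chord(1) unfolding second_rest_def second_comp_def by auto
  then have "join_point I \<notin> points second_rest"
    using matching_not_in_points(1)[OF matching_I] by fastforce
  moreover have "points second_rest \<subseteq> {1..2*n}"
    using points_mono[OF \<open>second_rest \<subseteq> I\<close>] points_I by simp
  ultimately have "move_to_front (join_point I) x \<noteq> 1" if "x \<in> points second_rest" for x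
    using that two_le_join_point by (auto simp: move_to_front_def)
  then have "1 \<notin> points (relabel (move_to_front (join_point I)) second_rest)"
    unfolding points_relabel by (metis imageE)
  then show ?thesis
    unfolding join_diagram_eq right_part_eq using root_ends_not_in_left_part(1) fst_in_points
    by fastforce
qed

lemma chord_at_join_one: "chord_at (join_diagram I) 1 = (1, join_end)"
proof -
  have "(1, join_end) \<in> join_diagram I" unfolding join_diagram_eq right_part_eq by simp
  then show ?thesis using chord_at_eq[OF matching_join] by simp
qed

lemma component_join_two:
  "component (join_diagram I - {(1, join_end)}) (chord_at (join_diagram I) 2) = left_part"
proof -
  let ?f = "move_to_front (join_point I)"
  let ?c = "relabel_chord ?f (chord_at I 1)"
  have "chord_at I 1 \<in> first_comp" using component_self unfolding first_comp_def by blast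
  then have c: "?c \<in> left_part" unfolding left_part_def by (rule relabel_chord_in_relabel)
  have "?f 1 = 2" using two_le_join_point by (simp add: move_to_front_def)
  then have "2 \<in> {fst ?c, snd ?c}" using chord_at_one(2) by (auto simp: ends_relabel_chord)
  then have "chord_at (join_diagram I) 2 = ?c"
    using chord_at_eq[OF matching_join, of ?c 2] c unfolding join_diagram_eq by blast
  moreover have "component (join_diagram I - {(1, join_end)}) ?c = left_part"
  proof (rule component_eq_connected[OF connected_left_part _ _ c])
    show "noncrossing left_part (join_diagram I - {(1, join_end)} - left_part)"
      using noncrossing_left_second_rest unfolding join_root_removed noncrossing_def by blast
    show "left_part \<subseteq> join_diagram I - {(1, join_end)}" unfolding join_root_removed by blast
  qed
  ultimately show ?thesis by simp
qed

lemma split_point_join_diagram: "split_point (join_diagram I) = join_point I"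
proof -
  have "split_point (join_diagram I) = Max {x \<in> points left_part. x < join_end}"
    unfolding split_point_def chord_at_join_one component_join_two by simp
  also have "\<dots> = join_point I"
  proof (rule Max_eqI)
    have "finite (join_diagram I)" using chord_diagram_join chord_diagram_card by blast
    then have "finite (points left_part)" unfolding join_diagram_eq by simp
    then show "finite {x \<in> points left_part. x < join_end}" by simp
    show "join_point I \<in> {x \<in> points left_part. x < join_end}"
      using join_point_in_left_part join_chord(2) by simp
    fix y assume "y \<in> {x \<in> points left_part. x < join_end}"
    then obtain x where x: "x \<in> points first_comp" "y = move_to_front (join_point I) x" "y < join_end"
      unfolding left_part_def points_relabel by blast
    show "y \<le> join_point I"
    proof (cases "x < join_point I")
      case True
      then show ?thesis using x(2) move_to_front_first_comp(1)[OF x(1)] by simp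
    next
      case False
      then show ?thesis using x(2,3) move_to_front_first_comp[OF x(1)] by simp
    qed
  qed
  finally show ?thesis .
qed

lemma split_join_diagram: "split_diagram (join_diagram I) = I"
  unfolding split_diagram_def split_point_join_diagram unfolding join_diagram_def
  using two_le_join_point points_I
  by (intro relabel_relabel_inverse[OF _ matching_I] move_front_to_move_to_front) auto

end

lemma bij_betw_split_diagram:
  assumes "2 \<le> n"
  shows "bij_betw split_diagram (connected_diagrams n) (indec_two_comp_diagrams n)"
proof -
  have split: "join_diagram (split_diagram D) = D \<and> split_diagram D \<in> indec_two_comp_diagrams n"
    if "D \<in> connected_diagrams n" for D
  proof -
    interpret connected_split n D
      using assms that by unfold_locales (auto simp: connected_diagrams_def)
    show ?thesis using join_split_diagram split_diagram_mem by simp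
  qed
  have join: "split_diagram (join_diagram I) = I \<and> join_diagram I \<in> connected_diagrams n"
    if "I \<in> indec_two_comp_diagrams n" for I
  proof -
    interpret indecomposable_join n I by unfold_locales (rule that)
    show ?thesis using split_join_diagram join_diagram_mem by simp
  qed
  show ?thesis
    by (rule bij_betw_byWitness[where f' = join_diagram]) (use split join in auto)
qed

subsection \<open>Diagrams with at most one chord\<close>

lemma indec_two_comp_diagrams_le_1: "n \<le> 1 \<Longrightarrow> indec_two_comp_diagrams n = {}"
proof (rule ccontr)
  assume "n \<le> 1" "indec_two_comp_diagrams n \<noteq> {}"
  then obtain M where "chord_diagram n M" "card (components M) = 2"
    unfolding indec_two_comp_diagrams_def by blast
  moreover have "card (components M) \<le> card M"
    unfolding components_eq_image by (rule card_image_le) (use calculation chord_diagram_card in blast)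
  ultimately show False using \<open>n \<le> 1\<close> chord_diagram_card by fastforce
qed

lemma connected_diagrams_0: "connected_diagrams 0 = {}"
  using chord_diagram_card unfolding connected_diagrams_def connected_diagram_def by fastforce

lemma connected_diagrams_1: "connected_diagrams 1 = {{(1, 2)}}"
proof -
  have "M = {(1, 2)}" if M: "chord_diagram 1 M" for M
  proof -
    obtain c where "M = {c}"
      using chord_diagram_card[OF M] by (auto simp: card_Suc_eq)
    moreover have "points M = {1, 2}" "fst c < snd c"
      using M matching_less \<open>M = {c}\<close> by (auto simp: chord_diagram_iff)
    ultimately show ?thesis by (auto simp: doubleton_eq_iff prod_eq_iff)
  qed
  moreover have "chord_diagram 1 {(1, 2)}" by (auto simp: chord_diagram_iff matching_def)
  moreover have "connected_diagram {(1, 2)}" by (simp add: connected_diagram_def)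
  ultimately show ?thesis unfolding connected_diagrams_def by blast
qed

theorem lemma3p6p1:
  shows "(\<forall>n\<ge>2. \<exists>f. bij_betw f (connected_diagrams n) (indec_two_comp_diagrams n))
         \<and> I2_gf = C_gf - fps_X"
proof
  show "\<forall>n\<ge>2. \<exists>f. bij_betw f (connected_diagrams n) (indec_two_comp_diagrams n)"
    using bij_betw_split_diagram by blast
  show "I2_gf = C_gf - fps_X"
  proof (rule fps_ext)
    fix k :: nat
    consider "k = 0" | "k = 1" | "2 \<le> k" by linarith
    then show "fps_nth I2_gf k = fps_nth (C_gf - fps_X) k"
    proof cases
      case 3
      then show ?thesis using bij_betw_same_card[OF bij_betw_split_diagram[OF 3]]
        by (simp add: I2_gf_def C_gf_def fps_X_nth)
    qed (use connected_diagrams_0 connected_diagrams_1 indec_two_comp_diagrams_le_1[of 0]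
        indec_two_comp_diagrams_le_1[of 1] in \<open>simp_all add: I2_gf_def C_gf_def fps_X_nth\<close>)
  qed
qed

end
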